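(* Let $X$ be a topological space with $|X| \ge 3$. For each $i \in \{0,1,2,3,3\tfrac12,5,6\}$, $X$ is a $T_i$-space if and only if every card of $X$ is a $T_i$-space. Consequently, for these $i$, if $Z$ is a reconstruction of $X$ then $X$ is $T_i$ if and only if $Z$ is $T_i$. Moreover, if every card of $X$ is $T_3$ and at least one card of $X$ is $T_4$, then $X$ is $T_4$.
   Context: For a topological space $X$ and $x \in X$, the set $X\setminus\{x\}$ carries the subspace topology. A card of $X$ is a space homeomorphic to $X \setminus \{x\}$ for some $x \in X$. The deck of $X$ is $\mathcal{D}(X)=\{[X\setminus\{x\}]_\sim : x \in X\}$, where $[Y]_\sim$ denotes the homeomorphism class of $Y$. A space $Z$ is a reconstruction of $X$ if $\mathcal{D}(Z)=\mathcal{D}(X)$. Separation axioms include the lower ones: $T_3$ means regular and $T_1$; $T_{3\frac12}$ (Tychonoff) means completely regular and $T_1$; $T_4$ means normal and $T_1$; $T_5$ means every subspace is $T_4$; $T_6$ means $T_4$ and every closed set is a $G_\delta$-set. *)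

theory Defs
  imports "HOL-Analysis.Analysis"
begin

datatype sep_index = T0 | T1 | T2 | T3 | T3half | T4 | T5 | T6

definition T4_space :: "'a topology \<Rightarrow> bool" where
  "T4_space X \<longleftrightarrow> normal_space X \<and> t1_space X"

fun sep_axiom :: "sep_index \<Rightarrow> 'a topology \<Rightarrow> bool" where
  "sep_axiom T0 X = t0_space X"
| "sep_axiom T1 X = t1_space X"
| "sep_axiom T2 X = Hausdorff_space X"
| "sep_axiom T3 X = (regular_space X \<and> t1_space X)"
| "sep_axiom T3half X = (completely_regular_space X \<and> t1_space X)"
| "sep_axiom T4 X = T4_space X"
| "sep_axiom T5 X = (\<forall>S \<subseteq> topspace X. T4_space (subtopology X S))"
| "sep_axiom T6 X = (T4_space X \<and> (\<forall>C. closedin X C \<longrightarrow> gdelta_in X C))"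

definition card_del :: "'a topology \<Rightarrow> 'a \<Rightarrow> 'a topology" where
  "card_del X x = subtopology X (topspace X - {x})"

text \<open>Equality of decks: the sets of homeomorphism classes of cards coincide.\<close>
definition same_deck :: "'a topology \<Rightarrow> 'b topology \<Rightarrow> bool" where
  "same_deck X Z \<longleftrightarrow>
     (\<forall>x\<in>topspace X. \<exists>z\<in>topspace Z. card_del X x homeomorphic_space card_del Z z) \<and>
     (\<forall>z\<in>topspace Z. \<exists>x\<in>topspace X. card_del Z z homeomorphic_space card_del X x)"

end

theory Submission
  imports Defs
begin

text \<open>
  Each separation axiom concerns two points, a point and a closed set, or two closed sets. When
  \<open>X\<close> has at least three points one may delete a point not involved, separate inside that card,
  and lift the separating sets back to \<open>X\<close>; once \<open>X\<close> is \<open>T\<^sub>1\<close> (which lifts first) every card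
  is open in \<open>X\<close>. A closed set through the deleted point is handled by combining two different
  cards (regularity) or by first shrinking it away from that point (normality); for \<open>T\<^sub>6\<close>, a
  closed set \<open>C\<close> is the union of the \<open>G\<^sub>\<delta>\<close>-sets \<open>C - {z}\<close> and \<open>C - {w}\<close>; and complete
  regularity is local for regular spaces, since a Urysohn function on an open card can be pasted
  with the constant \<open>1\<close>. Conversely every axiom except \<open>T\<^sub>4\<close> passes to cards, and all of them
  are homeomorphism invariants, so they are determined by the deck.
\<close>

definition has_three_points :: "'a topology \<Rightarrow> bool" where
  "has_three_points X \<longleftrightarrow> (\<forall>x y. \<exists>z\<in>topspace X. z \<noteq> x \<and> z \<noteq> y)"

lemma has_three_pointsI:
  assumes "a \<in> topspace X" "b \<in> topspace X" "c \<in> topspace X" "a \<noteq> b" "b \<noteq> c" "a \<noteq> c"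
  shows "has_three_points X"
proof (unfold has_three_points_def, intro allI)
  fix x y
  show "\<exists>z\<in>topspace X. z \<noteq> x \<and> z \<noteq> y"
    using assms by (cases "a \<in> {x, y}"; cases "b \<in> {x, y}") auto
qed

lemma has_three_points_if_card_ge_3:
  assumes "infinite (topspace X) \<or> card (topspace X) \<ge> 3"
  shows "has_three_points X"
proof -
  obtain B where B: "B \<subseteq> topspace X" "card B = 3"
  proof (cases "finite (topspace X)")
    case True
    with assms have "3 \<le> card (topspace X)" by simp
    then show ?thesis by (rule obtain_subset_with_card_n) (rule that)
  qed (use that infinite_arbitrarily_large in blast)
  then obtain a b c where "B = {a, b, c}" "a \<noteq> b" "b \<noteq> c" "a \<noteq> c"
    by (auto simp: card_3_iff)
  then show ?thesis
    using B(1) by (intro has_three_pointsI[of a X b c]) auto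
qed

lemma topspace_card_del [simp]: "topspace (card_del X x) = topspace X - {x}"
  by (auto simp: card_del_def)

lemma openin_card_del: "openin (card_del X z) U \<longleftrightarrow> (\<exists>V. openin X V \<and> U = V - {z})"
  unfolding card_del_def openin_subtopology using openin_subset by fastforce

lemma openin_card_del_imp_openin:
  assumes "t1_space X" "openin (card_del X z) U"
  shows "openin X U"
  using assms by (auto simp: openin_card_del t1_space_openin_delete_alt)

lemma closedin_card_del_Diff:
  assumes "closedin X C"
  shows "closedin (card_del X z) (C - {z})"
  unfolding card_del_def closedin_subtopology using closedin_subset[OF assms] assms by blast

lemma subtopology_card_del:
  assumes "S \<subseteq> topspace X - {x}"
  shows "subtopology (card_del X x) S = subtopology X S"
  using assms by (simp add: card_del_def subtopology_subtopology Int_absorb1)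

lemma t0_space_if_cards:
  assumes "has_three_points X" "\<forall>z\<in>topspace X. t0_space (card_del X z)"
  shows "t0_space X"
  unfolding t0_space_def
proof (intro ballI impI)
  fix x y assume xy: "x \<in> topspace X" "y \<in> topspace X" "x \<noteq> y"
  obtain z where z: "z \<in> topspace X" "z \<noteq> x" "z \<noteq> y"
    using assms(1) unfolding has_three_points_def by blast
  obtain U where "openin (card_del X z) U" "x \<notin> U \<longleftrightarrow> y \<in> U"
    using assms(2) z xy unfolding t0_space_def by (metis Diff_iff singletonD topspace_card_del)
  then show "\<exists>U. openin X U \<and> (x \<notin> U \<longleftrightarrow> y \<in> U)"
    using z by (auto simp: openin_card_del)
qed

lemma t1_space_if_cards:
  assumes "has_three_points X" "\<forall>z\<in>topspace X. t1_space (card_del X z)"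
  shows "t1_space X"
  unfolding t1_space_def
proof (intro ballI impI)
  fix x y assume xy: "x \<in> topspace X" "y \<in> topspace X" "x \<noteq> y"
  obtain z where z: "z \<in> topspace X" "z \<noteq> x" "z \<noteq> y"
    using assms(1) unfolding has_three_points_def by blast
  obtain U where "openin (card_del X z) U" "x \<in> U" "y \<notin> U"
    using assms(2) z xy unfolding t1_space_def by (metis Diff_iff singletonD topspace_card_del)
  then show "\<exists>U. openin X U \<and> x \<in> U \<and> y \<notin> U"
    using z by (auto simp: openin_card_del)
qed

lemma Hausdorff_space_if_cards:
  assumes "has_three_points X" "\<forall>z\<in>topspace X. Hausdorff_space (card_del X z)"
  shows "Hausdorff_space X"
  unfolding Hausdorff_space_def
proof (intro allI impI)
  fix x y assume xy: "x \<in> topspace X \<and> y \<in> topspace X \<and> x \<noteq> y"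
  have t1: "t1_space X"
    using t1_space_if_cards assms Hausdorff_imp_t1_space by blast
  obtain z where z: "z \<in> topspace X" "z \<noteq> x" "z \<noteq> y"
    using assms(1) unfolding has_three_points_def by blast
  obtain U V where "openin (card_del X z) U" "openin (card_del X z) V" "x \<in> U" "y \<in> V" "disjnt U V"
    using assms(2) z xy unfolding Hausdorff_space_def by (metis Diff_iff singletonD topspace_card_del)
  then show "\<exists>U V. openin X U \<and> openin X V \<and> x \<in> U \<and> y \<in> V \<and> disjnt U V"
    using openin_card_del_imp_openin[OF t1] by blast
qed

lemma regular_space_if_cards:
  assumes "has_three_points X" "t1_space X" "\<forall>z\<in>topspace X. regular_space (card_del X z)"
  shows "regular_space X"
  unfolding regular_space_def
proof (intro allI impI)
  fix C a assume Ca: "closedin X C \<and> a \<in> topspace X - C"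
  have separate: "\<exists>U V. openin X U \<and> openin X V \<and> a \<in> U \<and> C - {z} \<subseteq> V \<and> disjnt U V"
    if "z \<in> topspace X" "z \<noteq> a" for z
  proof -
    have "closedin (card_del X z) (C - {z}) \<and> a \<in> topspace (card_del X z) - (C - {z})"
      using Ca that closedin_card_del_Diff by auto
    moreover have "regular_space (card_del X z)"
      using assms(3) that(1) by blast
    ultimately obtain U V where "openin (card_del X z) U" "openin (card_del X z) V"
        "a \<in> U" "C - {z} \<subseteq> V" "disjnt U V"
      unfolding regular_space_def by meson
    then show ?thesis
      using openin_card_del_imp_openin[OF assms(2)] by blast
  qed
  obtain z w where zw: "z \<in> topspace X" "w \<in> topspace X" "z \<noteq> a" "w \<noteq> a" "z \<noteq> w"
    using assms(1) unfolding has_three_points_def by metis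
  obtain U1 V1 where 1: "openin X U1" "openin X V1" "a \<in> U1" "C - {z} \<subseteq> V1" "disjnt U1 V1"
    using separate zw by blast
  obtain U2 V2 where 2: "openin X U2" "openin X V2" "a \<in> U2" "C - {w} \<subseteq> V2" "disjnt U2 V2"
    using separate zw by blast
  show "\<exists>U V. openin X U \<and> openin X V \<and> a \<in> U \<and> C \<subseteq> V \<and> disjnt U V"
  proof (intro exI conjI)
    show "openin X (U1 \<inter> U2)" "openin X (V1 \<union> V2)"
      using 1 2 by auto
    show "a \<in> U1 \<inter> U2" "C \<subseteq> V1 \<union> V2" "disjnt (U1 \<inter> U2) (V1 \<union> V2)"
      using 1 2 zw by (auto simp: disjnt_def)
  qed
qed

lemma completely_regular_space_if_open_cover:
  assumes "regular_space X"
    and "\<And>x. x \<in> topspace X \<Longrightarrow>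
           \<exists>Y. openin X Y \<and> x \<in> Y \<and> completely_regular_space (subtopology X Y)"
  shows "completely_regular_space X"
  unfolding completely_regular_space_alt'
proof (intro allI impI)
  fix S x assume S: "openin X S" "x \<in> S"
  then have "x \<in> topspace X"
    using openin_subset by blast
  then obtain Y where Y: "openin X Y" "x \<in> Y" "completely_regular_space (subtopology X Y)"
    using assms(2) by blast
  have "closedin X (topspace X - S \<inter> Y) \<and> x \<in> topspace X - (topspace X - S \<inter> Y)"
    using S Y \<open>x \<in> topspace X\<close> by (simp add: closedin_diff openin_Int)
  then obtain W where W: "openin X W" "x \<in> W" "disjnt (topspace X - S \<inter> Y) (X closure_of W)"
    using assms(1)[unfolded regular_space, rule_format] by blast
  have clW: "X closure_of W \<subseteq> S \<inter> Y"
    using W(3) closure_of_subset_topspace by (fastforce simp: disjnt_iff)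
  have W_closure: "W \<subseteq> X closure_of W"
    by (simp add: W(1) closure_of_subset openin_subset)
  have "openin (subtopology X Y) W"
    using W(1) Y(1) W_closure clW by (auto simp: openin_open_subtopology)
  then obtain g where g: "continuous_map (subtopology X Y) euclideanreal g" "g x = 0"
      "g ` (topspace (subtopology X Y) - W) \<subseteq> {1}"
    using Y(3) W(2) unfolding completely_regular_space_alt' by blast
  define f where "f y = (if y \<in> Y then g y else 1)" for y
  let ?T = "\<lambda>b. if b then Y else topspace X - X closure_of W"
  have "continuous_map X euclideanreal f"
  proof (rule pasting_lemma[where I = UNIV and T = ?T and f = "\<lambda>b. if b then g else (\<lambda>_. 1)"])
    show "openin X (?T b)" for b
      using Y(1) by auto
    show "continuous_map (subtopology X (?T b)) euclideanreal (if b then g else (\<lambda>_. 1))" for b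
      using g(1) by auto
    show "(if b then g else (\<lambda>_. 1)) y = (if c then g else (\<lambda>_. 1)) y"
      if "y \<in> topspace X \<inter> ?T b \<inter> ?T c" for b c y
      \<comment> \<open>the overlap lies in \<open>Y - W\<close>, where \<open>g\<close> is already \<open>1\<close>\<close>
      using that g(3) W_closure by (fastforce simp: image_subset_iff)
    show "\<exists>b. b \<in> UNIV \<and> y \<in> ?T b \<and> f y = (if b then g else (\<lambda>_. 1)) y"
      if "y \<in> topspace X" for y
      using that clW by (auto simp: f_def)
  qed
  moreover have "f x = 0"
    using Y(2) g(2) by (simp add: f_def)
  moreover have "f ` (topspace X - S) \<subseteq> {1}"
    using clW W_closure g(3) by (auto simp: f_def)
  ultimately show "\<exists>f. continuous_map X euclideanreal f \<and> f x = 0 \<and> f ` (topspace X - S) \<subseteq> {1}"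
    by blast
qed

lemma completely_regular_space_if_cards:
  assumes "has_three_points X" "t1_space X" "regular_space X"
    and "\<forall>z\<in>topspace X. completely_regular_space (card_del X z)"
  shows "completely_regular_space X"
proof (rule completely_regular_space_if_open_cover[OF assms(3)])
  fix x assume "x \<in> topspace X"
  obtain z where z: "z \<in> topspace X" "z \<noteq> x"
    using assms(1) unfolding has_three_points_def by blast
  show "\<exists>Y. openin X Y \<and> x \<in> Y \<and> completely_regular_space (subtopology X Y)"
  proof (intro exI conjI)
    show "openin X (topspace X - {z})"
      using assms(2) by (simp add: t1_space_openin_delete_alt)
    show "x \<in> topspace X - {z}"
      using \<open>x \<in> topspace X\<close> z by simp
    show "completely_regular_space (subtopology X (topspace X - {z}))"
      using assms(4) z(1) by (simp add: card_del_def)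
  qed
qed

lemma normal_space_if_card:
  assumes "t1_space X" "regular_space X" "z \<in> topspace X" "normal_space (card_del X z)"
  shows "normal_space X"
proof -
  have separate: "\<exists>U V. openin X U \<and> openin X V \<and> A \<subseteq> U \<and> B \<subseteq> V \<and> disjnt U V"
    if AB: "closedin X A" "closedin X B" "disjnt A B" "z \<notin> B" for A B
  proof -
    have "closedin X B \<and> z \<in> topspace X - B"
      using AB assms(3) by simp
    then obtain U0 V0 where U0: "openin X U0" "openin X V0" "z \<in> U0" "B \<subseteq> V0" "disjnt U0 V0"
      using assms(2) unfolding regular_space_def by meson
    have "A - U0 - {z} = A - U0" "B - {z} = B"
      using U0(3) AB(4) by auto
    then have "closedin (card_del X z) (A - U0)" "closedin (card_del X z) B"
      using closedin_card_del_Diff[OF closedin_diff[OF AB(1) U0(1)], of z]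
        closedin_card_del_Diff[OF AB(2), of z] by simp_all
    moreover have "disjnt (A - U0) B"
      using AB(3) by (auto simp: disjnt_def)
    ultimately obtain U V where UV: "openin (card_del X z) U" "openin (card_del X z) V"
        "A - U0 \<subseteq> U" "B \<subseteq> V" "disjnt U V"
      using assms(4) unfolding normal_space_def by meson
    show ?thesis
    proof (intro exI conjI)
      show "openin X (U \<union> U0)" "openin X (V \<inter> V0)"
        using UV U0 openin_card_del_imp_openin[OF assms(1)] by auto
      show "A \<subseteq> U \<union> U0" "B \<subseteq> V \<inter> V0" "disjnt (U \<union> U0) (V \<inter> V0)"
        using UV U0 by (auto simp: disjnt_def)
    qed
  qed
  show ?thesis
    unfolding normal_space_def
  proof (intro allI impI)
    fix A B assume "closedin X A \<and> closedin X B \<and> disjnt A B"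
    then show "\<exists>U V. openin X U \<and> openin X V \<and> A \<subseteq> U \<and> B \<subseteq> V \<and> disjnt U V"
      using separate[of A B] separate[of B A] by (metis disjnt_iff disjnt_sym)
  qed
qed

lemma T4_space_if_T3_cards_and_T4_card:
  assumes "has_three_points X" "\<forall>x\<in>topspace X. sep_axiom T3 (card_del X x)"
    and "z \<in> topspace X" "T4_space (card_del X z)"
  shows "T4_space X"
proof -
  have "t1_space X"
    using t1_space_if_cards assms(1,2) by auto
  moreover have "regular_space X"
    using regular_space_if_cards[OF assms(1) \<open>t1_space X\<close>] assms(2) by auto
  ultimately show ?thesis
    using normal_space_if_card assms(3,4) by (auto simp: T4_space_def)
qed

lemma closedin_imp_gdelta_in_if_cards:
  assumes "has_three_points X" "t1_space X" "closedin X C"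
    and "\<forall>z\<in>topspace X. \<forall>D. closedin (card_del X z) D \<longrightarrow> gdelta_in (card_del X z) D"
  shows "gdelta_in X C"
proof -
  have "gdelta_in X (C - {z})" if "z \<in> topspace X" for z
  proof -
    have "gdelta_in (card_del X z) (C - {z})"
      using assms(4) that closedin_card_del_Diff[OF assms(3)] by blast
    then obtain T where T: "gdelta_in X T" "C - {z} = T \<inter> (topspace X - {z})"
      by (auto simp: card_del_def gdelta_in_subtopology)
    moreover have "gdelta_in X (topspace X - {z})"
      using assms(2) by (simp add: open_imp_gdelta_in t1_space_openin_delete_alt)
    ultimately show ?thesis
      by (simp add: gdelta_in_Int)
  qed
  moreover obtain z w where "z \<in> topspace X" "w \<in> topspace X" "z \<noteq> w"
    using assms(1) unfolding has_three_points_def by blast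
  ultimately have "gdelta_in X ((C - {z}) \<union> (C - {w}))"
    by (simp add: gdelta_in_Un)
  moreover have "(C - {z}) \<union> (C - {w}) = C"
    using \<open>z \<noteq> w\<close> by blast
  ultimately show ?thesis
    by simp
qed

lemma sep_axiom_T5_iff: "sep_axiom T5 X \<longleftrightarrow> hereditarily normal_space X \<and> t1_space X"
proof
  assume "sep_axiom T5 X"
  then have "\<forall>S\<subseteq>topspace X. normal_space (subtopology X S) \<and> t1_space (subtopology X S)"
    by (simp add: T4_space_def)
  then show "hereditarily normal_space X \<and> t1_space X"
    by (metis hereditarily_def subset_refl subtopology_topspace)
qed (simp add: hereditarily_def T4_space_def t1_space_subtopology)

lemma sep_axiom_T6_open_subtopology:
  assumes "sep_axiom T6 X" "openin X S"
  shows "sep_axiom T6 (subtopology X S)"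
proof -
  have X: "normal_space X" "t1_space X" "\<And>C. closedin X C \<Longrightarrow> gdelta_in X C"
    using assms(1) by (auto simp: T4_space_def)
  have "fsigma_in X S"
    using X(3)[of "topspace X - S"] assms(2)
    by (simp add: fsigma_in_gdelta_in openin_subset closedin_diff)
  then have "normal_space (subtopology X S)"
    using X(1) normal_space_fsigma_subtopology by blast
  moreover have "gdelta_in (subtopology X S) D" if "closedin (subtopology X S) D" for D
    using that X(3) by (auto simp: closedin_subtopology gdelta_in_subtopology)
  ultimately show ?thesis
    using X(2) by (simp add: T4_space_def t1_space_subtopology)
qed

lemma sep_axiom_card_del:
  assumes "i \<noteq> T4" "sep_axiom i X" "x \<in> topspace X"
  shows "sep_axiom i (card_del X x)"
proof (cases i)
  case T5
  then have "hereditarily normal_space X \<and> t1_space X"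
    using assms(2) sep_axiom_T5_iff by blast
  then have "hereditarily normal_space (card_del X x) \<and> t1_space (card_del X x)"
    by (simp add: card_del_def hereditarily_subtopology t1_space_subtopology)
  then show ?thesis
    using T5 sep_axiom_T5_iff by blast
next
  case T6
  then have "openin X (topspace X - {x})"
    using assms(2) by (simp add: T4_space_def t1_space_openin_delete_alt)
  then show ?thesis
    using sep_axiom_T6_open_subtopology assms(2) T6 by (simp add: card_del_def)
qed (use assms in \<open>auto simp: card_del_def t0_space_subtopology t1_space_subtopology
      Hausdorff_space_subtopology regular_space_subtopology completely_regular_space_subtopology\<close>)

lemma T4_space_if_all_cards:
  assumes "has_three_points X" "\<forall>x\<in>topspace X. T4_space (card_del X x)"
  shows "T4_space X"
proof -
  obtain z where "z \<in> topspace X"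
    using assms(1) unfolding has_three_points_def by blast
  moreover have "\<forall>x\<in>topspace X. sep_axiom T3 (card_del X x)"
    using assms(2) normal_t1_imp_regular_space by (auto simp: T4_space_def)
  ultimately show ?thesis
    using T4_space_if_T3_cards_and_T4_card[OF assms(1)] assms(2) by blast
qed

lemma sep_axiom_T5_if_cards:
  assumes "has_three_points X" "\<forall>x\<in>topspace X. sep_axiom T5 (card_del X x)"
  shows "sep_axiom T5 X"
  unfolding sep_axiom.simps
proof (intro allI impI)
  have cards: "\<forall>x\<in>topspace X. \<forall>S\<subseteq>topspace X - {x}. T4_space (subtopology (card_del X x) S)"
    using assms(2) by simp
  fix S assume S: "S \<subseteq> topspace X"
  show "T4_space (subtopology X S)"
  proof (cases "S = topspace X")
    case True
    have "T4_space (card_del X x)" if "x \<in> topspace X" for x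
      using cards that subtopology_topspace[of "card_del X x"] by (metis order_refl topspace_card_del)
    then show ?thesis
      using T4_space_if_all_cards[OF assms(1)] True by simp
  next
    case False
    then obtain z where z: "z \<in> topspace X" "S \<subseteq> topspace X - {z}"
      using S by blast
    then have "T4_space (subtopology (card_del X z) S)"
      using cards by blast
    then show ?thesis
      using subtopology_card_del[OF z(2)] by simp
  qed
qed

lemma sep_axiom_if_cards:
  assumes "has_three_points X" "\<forall>x\<in>topspace X. sep_axiom i (card_del X x)"
  shows "sep_axiom i X"
proof (cases i)
  case T0
  then show ?thesis using assms t0_space_if_cards by simp
next
  case T1
  then show ?thesis using assms t1_space_if_cards by simp
next
  case T2
  then show ?thesis using assms Hausdorff_space_if_cards by simp
next
  case T3
  then have cards: "\<forall>x\<in>topspace X. regular_space (card_del X x) \<and> t1_space (card_del X x)"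
    using assms(2) by simp
  then have "t1_space X"
    using assms(1) t1_space_if_cards by blast
  moreover have "regular_space X"
    using cards regular_space_if_cards[OF assms(1) \<open>t1_space X\<close>] by blast
  ultimately show ?thesis
    using T3 by simp
next
  case T3half
  then have cards: "\<forall>x\<in>topspace X. completely_regular_space (card_del X x) \<and> t1_space (card_del X x)"
    using assms(2) by simp
  then have "t1_space X"
    using assms(1) t1_space_if_cards by blast
  moreover have "regular_space X"
    using cards regular_space_if_cards[OF assms(1) \<open>t1_space X\<close>]
      completely_regular_imp_regular_space by blast
  moreover have "completely_regular_space X"
    using completely_regular_space_if_cards[OF assms(1) \<open>t1_space X\<close> \<open>regular_space X\<close>] cards
    by blast
  ultimately show ?thesis
    using T3half by simp
next
  case T4
  then show ?thesis using assms T4_space_if_all_cards by simp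
next
  case T5
  then show ?thesis using assms sep_axiom_T5_if_cards by simp
next
  case T6
  then have cards: "\<forall>x\<in>topspace X. T4_space (card_del X x)"
    and gdelta: "\<forall>x\<in>topspace X. \<forall>D. closedin (card_del X x) D \<longrightarrow> gdelta_in (card_del X x) D"
    using assms(2) by simp_all
  have "T4_space X"
    using T4_space_if_all_cards[OF assms(1) cards] .
  moreover have "gdelta_in X C" if "closedin X C" for C
    using closedin_imp_gdelta_in_if_cards[OF assms(1) _ that gdelta] \<open>T4_space X\<close>
    by (simp add: T4_space_def)
  ultimately show ?thesis
    using T6 by simp
qed

lemma sep_axiom_iff_cards:
  assumes "has_three_points X" "i \<noteq> T4"
  shows "sep_axiom i X \<longleftrightarrow> (\<forall>x\<in>topspace X. sep_axiom i (card_del X x))"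
  using sep_axiom_card_del[OF assms(2)] sep_axiom_if_cards[OF assms(1)] by auto

lemma sep_axiom_homeomorphic:
  assumes "X homeomorphic_space Y" "sep_axiom i X"
  shows "sep_axiom i Y"
proof (cases i)
  case T5
  then have "hereditarily normal_space X \<and> t1_space X"
    using assms(2) sep_axiom_T5_iff by blast
  then have "hereditarily normal_space Y \<and> t1_space Y"
    using homeomorphic_hereditarily_normal_space[OF assms(1)] homeomorphic_t1_space[OF assms(1)]
    by blast
  then show ?thesis
    using T5 sep_axiom_T5_iff by blast
next
  case T6
  obtain f g where "homeomorphic_maps X Y f g"
    using assms(1) unfolding homeomorphic_space_def by blast
  then have g: "homeomorphic_map Y X g"
    by (simp add: homeomorphic_maps_map)
  have "gdelta_in Y C" if "closedin Y C" for C
  proof -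
    have "closedin X (g ` C)"
      using that homeomorphic_map_closedness_eq[OF g] by blast
    then have "gdelta_in X (g ` C)"
      using assms(2) T6 by simp
    then show ?thesis
      using homeomorphic_map_gdeltaness_eq[OF g] closedin_subset[OF that] by blast
  qed
  then show ?thesis
    using assms(2) T6 homeomorphic_normal_space[OF assms(1)] homeomorphic_t1_space[OF assms(1)]
    by (simp add: T4_space_def)
qed (use assms(2) in \<open>simp_all add: T4_space_def homeomorphic_t0_space[OF assms(1)]
      homeomorphic_t1_space[OF assms(1)] homeomorphic_Hausdorff_space[OF assms(1)]
      homeomorphic_regular_space[OF assms(1)] homeomorphic_completely_regular_space[OF assms(1)]
      homeomorphic_normal_space[OF assms(1)]\<close>)

lemma same_deck_sym: "same_deck X Z \<longleftrightarrow> same_deck Z X"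
  unfolding same_deck_def by blast

lemma cards_sep_axiom_if_same_deck:
  assumes "same_deck X Z" "\<forall>x\<in>topspace X. sep_axiom i (card_del X x)"
  shows "\<forall>z\<in>topspace Z. sep_axiom i (card_del Z z)"
proof
  fix z assume "z \<in> topspace Z"
  then obtain x where "x \<in> topspace X" "card_del Z z homeomorphic_space card_del X x"
    using assms(1) unfolding same_deck_def by blast
  moreover from this(2) have "card_del X x homeomorphic_space card_del Z z"
    by (rule homeomorphic_space_sym[THEN iffD1])
  ultimately show "sep_axiom i (card_del Z z)"
    using assms(2) sep_axiom_homeomorphic by blast
qed

lemma has_three_points_if_same_deck:
  assumes "has_three_points X" "same_deck X Z"
  shows "has_three_points Z"
proof -
  obtain x where x: "x \<in> topspace X"
    using assms(1) unfolding has_three_points_def by blast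
  obtain p where p: "p \<in> topspace X" "p \<noteq> x"
    using assms(1) unfolding has_three_points_def by blast
  obtain q where q: "q \<in> topspace X" "q \<noteq> x" "q \<noteq> p"
    using assms(1) unfolding has_three_points_def by blast
  have pq: "p \<in> topspace X - {x}" "q \<in> topspace X - {x}" "p \<noteq> q"
    using p q by auto
  obtain z where z: "z \<in> topspace Z" "card_del X x homeomorphic_space card_del Z z"
    using assms(2) x unfolding same_deck_def by blast
  then obtain f where f: "homeomorphic_map (card_del X x) (card_del Z z) f"
    unfolding homeomorphic_space by blast
  have "f p \<in> topspace Z - {z}" "f q \<in> topspace Z - {z}"
    using pq homeomorphic_imp_surjective_map[OF f] by auto
  moreover have "f p \<noteq> f q"
    using pq homeomorphic_imp_injective_map[OF f] by (auto dest: inj_onD)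
  ultimately show ?thesis
    using z(1) by (intro has_three_pointsI[of z Z "f p" "f q"]) auto
qed

lemma sep_axiom_iff_if_same_deck:
  assumes "has_three_points X" "same_deck Z X" "i \<noteq> T4"
  shows "sep_axiom i X \<longleftrightarrow> sep_axiom i Z"
proof -
  have XZ: "same_deck X Z"
    using assms(2) same_deck_sym by blast
  then have "has_three_points Z"
    using has_three_points_if_same_deck[OF assms(1)] by blast
  moreover have "(\<forall>x\<in>topspace X. sep_axiom i (card_del X x)) \<longleftrightarrow>
      (\<forall>z\<in>topspace Z. sep_axiom i (card_del Z z))"
    using cards_sep_axiom_if_same_deck[OF XZ] cards_sep_axiom_if_same_deck[OF assms(2)] by blast
  ultimately show ?thesis
    using sep_axiom_iff_cards[OF assms(1,3)] sep_axiom_iff_cards[OF _ assms(3)] by blast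
qed

theorem theorem3p1:
  fixes X :: "'a topology"
  assumes "infinite (topspace X) \<or> card (topspace X) \<ge> 3"
  shows "(\<forall>i\<in>{T0, T1, T2, T3, T3half, T5, T6}.
            sep_axiom i X \<longleftrightarrow> (\<forall>x\<in>topspace X. sep_axiom i (card_del X x)))
       \<and> (\<forall>Z :: 'b topology. same_deck Z X \<longrightarrow>
            (\<forall>i\<in>{T0, T1, T2, T3, T3half, T5, T6}. sep_axiom i X \<longleftrightarrow> sep_axiom i Z))
       \<and> ((\<forall>x\<in>topspace X. sep_axiom T3 (card_del X x))
            \<and> (\<exists>x\<in>topspace X. sep_axiom T4 (card_del X x))
            \<longrightarrow> sep_axiom T4 X)"
proof (intro conjI ballI allI impI)
  have X: "has_three_points X"
    using assms by (rule has_three_points_if_card_ge_3)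
  show "sep_axiom i X \<longleftrightarrow> (\<forall>x\<in>topspace X. sep_axiom i (card_del X x))"
    if "i \<in> {T0, T1, T2, T3, T3half, T5, T6}" for i
    using that by (intro sep_axiom_iff_cards[OF X]) auto
  show "sep_axiom i X \<longleftrightarrow> sep_axiom i Z"
    if "same_deck Z X" "i \<in> {T0, T1, T2, T3, T3half, T5, T6}" for Z :: "'b topology" and i
    using that by (intro sep_axiom_iff_if_same_deck[OF X]) auto
  show "sep_axiom T4 X"
    if "(\<forall>x\<in>topspace X. sep_axiom T3 (card_del X x)) \<and> (\<exists>x\<in>topspace X. sep_axiom T4 (card_del X x))"
    using that T4_space_if_T3_cards_and_T4_card[OF X] by auto
qed

end
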